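(* Let $w,w_1,w_2\in\{\mathrm{cla},\mathrm{sup},\mathrm{sta}\}$ be types, $g$ a generating function that is $w_1$-approximating with respect to $w$, $t$ a witness function that is $w_2$-ensuring with respect to $w$, and $\Pi$ a program. Then the set of all stable models of $\Pi$ equals $$\{L_{|\mathrm{atoms}(\Pi)} \mid L \text{ is a } w_1\text{-model of } g(\Pi) \text{ and } t(\Pi,L) \text{ has no } w_2\text{-models}\}.$$
   Context: Literals are atoms $a$ or negations $\neg a$. For a conjunction (resp. disjunction) $D$ of literals, viewed as a set, $\overline{D}$ is the disjunction (resp. conjunction) of the complements of its elements; as a set, the set of these complements. A set of literals is consistent if it contains no literal together with its complement. For a set $L$ of literals, $\mathrm{atoms}(L)$ is the set of atoms occurring in $L$, $L^+$ the set of atoms occurring positively in $L$, and for a set $X$ of atoms $L_{|X}$ is the set of literals of $L$ whose atom is in $X$; $L$ is complete over $X$ if $\mathrm{atoms}(L)=X$. A consistent set of literals is identified with the assignment making its positive atoms true and negated atoms false. A program $\Pi$ is a finite set of rules $A\leftarrow B$, with head $A$ a possibly empty disjunction (set) of atoms and body $B$ an expression $a_1,\dots,a_j,\ not\ a_{j+1},\dots,not\ a_k$, identified with the conjunction of literals $a_1\wedge\dots\wedge a_j\wedge\neg a_{j+1}\wedge\dots\wedge\neg a_k$; non-disjunctive if all heads have at most one atom. A rule $A\leftarrow B$ is identified with the clause $A\vee\overline B$. $\mathrm{atoms}(\Pi)$ is the set of atoms of $\Pi$. The reduct $\Pi^X$ deletes each rule whose negative body part contains an atom of $X$ and removes the negative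 body part from the remaining rules; $X$ is an answer set of $\Pi$ if it is minimal among sets of atoms satisfying $\Pi^X$. A rule $A\vee a\leftarrow B$ is supporting for $a$ w.r.t. $L$ if $L\cap(\overline B\cup A)=\emptyset$. A consistent $L$ complete over $\mathrm{atoms}(\Pi)$ is a $\mathrm{cla}$-model (classical model) if it satisfies every rule, a $\mathrm{sup}$-model if additionally every $a\in L^+$ has a supporting rule w.r.t. $L$, and a $\mathrm{sta}$-model (stable model) if $L^+$ is an answer set of $\Pi$. A generating function $g$ maps each program $\Pi$ to a program $g(\Pi)$ with $\mathrm{atoms}(\Pi)\subseteq\mathrm{atoms}(g(\Pi))$. A set $M$ covers $\Pi$ if $\mathrm{atoms}(\Pi)\subseteq\mathrm{atoms}(M)$. A witness function $t$ maps a program $\Pi$ and a consistent set $M$ of literals covering $\Pi$ to a non-disjunctive program $t(\Pi,M)$. $g$ is $w_1$-approximating w.r.t. $w$ if for every program $\Pi$: (1) for every stable model $L$ of $\Pi$ there is a $w_1$-model $L_1$ of $g(\Pi)$ with $L=(L_1)_{|\mathrm{atoms}(\Pi)}$; (2) for every $w_1$-model $M$ of $g(\Pi)$, $M_{|\mathrm{atoms}(\Pi)}$ is a $w$-model of $\Pi$. $t$ is $w_1$-ensuring w.r.t. $w$ if for every program $\Pi$ and every consistent set $M$ of literals covering $\Pi$ with $M_{|\mathrm{atoms}(\Pi)}$ a $w$-model of $\Pi$: $M_{|\mathrm{atoms}(\Pi)}$ is a stable model of $\Pi$ iff $t(\Pi,M)$ has no $w_1$-model. *)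

theory Defs
  imports Main
begin

datatype 'a lit = Pos 'a | Neg 'a

fun atom :: "'a lit \<Rightarrow> 'a" where
  "atom (Pos a) = a" | "atom (Neg a) = a"

fun compl :: "'a lit \<Rightarrow> 'a lit" where
  "compl (Pos a) = Neg a" | "compl (Neg a) = Pos a"

definition overline :: "'a lit set \<Rightarrow> 'a lit set" where
  "overline D = compl ` D"

definition atoms_lits :: "'a lit set \<Rightarrow> 'a set" where
  "atoms_lits L = atom ` L"

definition pos_part :: "'a lit set \<Rightarrow> 'a set" where
  "pos_part L = {a. Pos a \<in> L}"

definition neg_part :: "'a lit set \<Rightarrow> 'a set" where
  "neg_part L = {a. Neg a \<in> L}"

definition consistent :: "'a lit set \<Rightarrow> bool" where
  "consistent L \<longleftrightarrow> (\<forall>l \<in> L. compl l \<notin> L)"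

definition restrict :: "'a lit set \<Rightarrow> 'a set \<Rightarrow> 'a lit set" where
  "restrict L X = {l \<in> L. atom l \<in> X}"

text \<open>A rule A <- B: head A is a set of atoms (disjunction), body B a set of literals (conjunction).\<close>
datatype 'a rule = Rule (head: "'a set") (body: "'a lit set")

definition program :: "'a rule set \<Rightarrow> bool" where
  "program P \<longleftrightarrow> finite P \<and> (\<forall>r \<in> P. finite (head r) \<and> finite (body r))"

definition nondisjunctive :: "'a rule set \<Rightarrow> bool" where
  "nondisjunctive P \<longleftrightarrow> (\<forall>r \<in> P. card (head r) \<le> 1)"

definition atoms :: "'a rule set \<Rightarrow> 'a set" where
  "atoms P = (\<Union>r \<in> P. head r \<union> atoms_lits (body r))"

definition complete_over :: "'a lit set \<Rightarrow> 'a set \<Rightarrow> bool" where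
  "complete_over L X \<longleftrightarrow> atoms_lits L = X"

definition covers :: "'a lit set \<Rightarrow> 'a rule set \<Rightarrow> bool" where
  "covers M P \<longleftrightarrow> atoms P \<subseteq> atoms_lits M"

text \<open>The clause of rule A <- B is A \<or> overline B; L satisfies it if it contains one of its literals.\<close>
definition sat_rule :: "'a lit set \<Rightarrow> 'a rule \<Rightarrow> bool" where
  "sat_rule L r \<longleftrightarrow> L \<inter> (Pos ` head r \<union> overline (body r)) \<noteq> {}"

definition supporting :: "'a rule \<Rightarrow> 'a \<Rightarrow> 'a lit set \<Rightarrow> bool" where
  "supporting r a L \<longleftrightarrow> a \<in> head r \<and>
     L \<inter> (overline (body r) \<union> Pos ` (head r - {a})) = {}"

definition reduct :: "'a rule set \<Rightarrow> 'a set \<Rightarrow> 'a rule set" where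
  "reduct P X = {Rule (head r) (Pos ` pos_part (body r)) | r. r \<in> P \<and> neg_part (body r) \<inter> X = {}}"

definition sat_atoms :: "'a set \<Rightarrow> 'a rule set \<Rightarrow> bool" where
  "sat_atoms Y P \<longleftrightarrow> (\<forall>r \<in> P. pos_part (body r) \<subseteq> Y \<longrightarrow> head r \<inter> Y \<noteq> {})"

definition answer_set :: "'a rule set \<Rightarrow> 'a set \<Rightarrow> bool" where
  "answer_set P X \<longleftrightarrow> sat_atoms X (reduct P X) \<and>
     (\<forall>Y. Y \<subseteq> X \<and> sat_atoms Y (reduct P X) \<longrightarrow> Y = X)"

datatype mtype = Cla | Sup | Sta

fun model :: "mtype \<Rightarrow> 'a rule set \<Rightarrow> 'a lit set \<Rightarrow> bool" where
  "model Cla P L \<longleftrightarrow> consistent L \<and> complete_over L (atoms P) \<and> (\<forall>r \<in> P. sat_rule L r)"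
| "model Sup P L \<longleftrightarrow> consistent L \<and> complete_over L (atoms P) \<and> (\<forall>r \<in> P. sat_rule L r) \<and>
     (\<forall>a \<in> pos_part L. \<exists>r \<in> P. supporting r a L)"
| "model Sta P L \<longleftrightarrow> consistent L \<and> complete_over L (atoms P) \<and> answer_set P (pos_part L)"

definition generating_function :: "('a rule set \<Rightarrow> 'a rule set) \<Rightarrow> bool" where
  "generating_function g \<longleftrightarrow> (\<forall>P. program P \<longrightarrow> program (g P) \<and> atoms P \<subseteq> atoms (g P))"

definition witness_function :: "('a rule set \<Rightarrow> 'a lit set \<Rightarrow> 'a rule set) \<Rightarrow> bool" where
  "witness_function t \<longleftrightarrow> (\<forall>P M. program P \<and> consistent M \<and> covers M P \<longrightarrow>
      program (t P M) \<and> nondisjunctive (t P M))"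

definition approximating ::
  "('a rule set \<Rightarrow> 'a rule set) \<Rightarrow> mtype \<Rightarrow> mtype \<Rightarrow> bool" where
  "approximating g w1 w \<longleftrightarrow> (\<forall>P. program P \<longrightarrow>
     (\<forall>L. model Sta P L \<longrightarrow> (\<exists>L1. model w1 (g P) L1 \<and> L = restrict L1 (atoms P))) \<and>
     (\<forall>M. model w1 (g P) M \<longrightarrow> model w P (restrict M (atoms P))))"

definition ensuring ::
  "('a rule set \<Rightarrow> 'a lit set \<Rightarrow> 'a rule set) \<Rightarrow> mtype \<Rightarrow> mtype \<Rightarrow> bool" where
  "ensuring t w1 w \<longleftrightarrow> (\<forall>P M. program P \<and> consistent M \<and> covers M P \<and>
     model w P (restrict M (atoms P)) \<longrightarrow>
     (model Sta P (restrict M (atoms P)) \<longleftrightarrow> \<not> (\<exists>N. model w1 (t P M) N)))"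

end

theory Submission
  imports Defs
begin

text \<open>Every w1-model L of g(\<Pi>) restricts to a w-model of \<Pi> and covers \<Pi>, so the
  ensuring property of t applies to it: its restriction is stable exactly when t(\<Pi>, L)
  has no w2-model. Conversely every stable model of \<Pi> is such a restriction.\<close>

lemma model_consistent: "model w P L \<Longrightarrow> consistent L"
  by (cases w) auto

lemma model_atoms_lits: "model w P L \<Longrightarrow> atoms_lits L = atoms P"
  by (cases w) (auto simp: complete_over_def)

lemma model_of_generated_covers:
  assumes "generating_function g" "program P" "model w (g P) M"
  shows "covers M P"
  using assms model_atoms_lits[OF assms(3)] by (auto simp: generating_function_def covers_def)

lemma stable_restrict_iff_no_witness_model:
  assumes "generating_function g" "approximating g w1 w" "ensuring t w2 w" "program P"
    and M: "model w1 (g P) M"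
  shows "model Sta P (restrict M (atoms P)) \<longleftrightarrow> \<not> (\<exists>N. model w2 (t P M) N)"
proof -
  have "model w P (restrict M (atoms P))"
    using assms(2,4) M by (auto simp: approximating_def)
  moreover have "covers M P"
    using model_of_generated_covers[OF assms(1,4) M] .
  ultimately show ?thesis
    using assms(3,4) model_consistent[OF M] by (auto simp: ensuring_def)
qed

lemma stable_model_extends_to_generated_model:
  assumes "approximating g w1 w" "program P" "model Sta P L"
  obtains L1 where "model w1 (g P) L1" "L = restrict L1 (atoms P)"
  using assms by (auto simp: approximating_def)

theorem proposition4:
  fixes g :: "'a rule set \<Rightarrow> 'a rule set"
    and t :: "'a rule set \<Rightarrow> 'a lit set \<Rightarrow> 'a rule set"
    and w w1 w2 :: mtype
    and P :: "'a rule set"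
  assumes "generating_function g"
    and "approximating g w1 w"
    and "witness_function t"
    and "ensuring t w2 w"
    and "program P"
  shows "{L. model Sta P L} =
    {restrict L (atoms P) | L. model w1 (g P) L \<and> \<not> (\<exists>N. model w2 (t P L) N)}"
proof -
  note key = stable_restrict_iff_no_witness_model[OF assms(1,2,4,5)]
  show ?thesis
  proof (intro set_eqI iffI)
    fix L assume "L \<in> {L. model Sta P L}"
    then obtain L1 where "model w1 (g P) L1" "L = restrict L1 (atoms P)"
      using stable_model_extends_to_generated_model[OF assms(2,5)] by blast
    with key \<open>L \<in> _\<close> show "L \<in> {restrict L (atoms P) | L. model w1 (g P) L \<and> \<not> (\<exists>N. model w2 (t P L) N)}"
      by auto
  qed (use key in auto)
qed

end
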